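(* Let $A$ and $B$ be rings, $f: A\to B$ a ring homomorphism and $J$ a proper ideal of $B$. Then: (1) If $A\bowtie^{f}J$ is a nil-Armendariz ring, then $A$ is a nil-Armendariz ring. (2) If $A$ and $f(A)+J$ are nil-Armendariz rings, then $A\bowtie^{f}J$ is a nil-Armendariz ring.
   Context: All rings are associative with identity (not necessarily commutative), ring homomorphisms are unital, and ideals are two-sided. $\mathrm{nil}(R)$ denotes the set of nilpotent elements of a ring $R$, and $\mathrm{nil}(R)[x]$ the set of polynomials all of whose coefficients lie in $\mathrm{nil}(R)$. For a ring homomorphism $f:A\to B$ and an ideal $J$ of $B$, the amalgamation is the subring $A\bowtie^{f}J=\{(a,f(a)+j)\mid a\in A,\ j\in J\}$ of $A\times B$; $f(A)+J=\{f(a)+j: a\in A, j\in J\}$ is a subring of $B$. A ring $R$ is nil-Armendariz if whenever $p(x)=\sum_{i=0}^n a_ix^i$ and $q(x)=\sum_{j=0}^m b_jx^j$ in $R[x]$ satisfy $p(x)q(x)\in\mathrm{nil}(R)[x]$, then $a_ib_j\in\mathrm{nil}(R)$ for all $i,j$. *)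

theory Defs
  imports "HOL-Algebra.Algebra"
begin

definition nil_elems :: "('a, 'm) ring_scheme \<Rightarrow> 'a set" where
  "nil_elems R = {x \<in> carrier R. \<exists>n::nat. x [^]\<^bsub>R\<^esub> n = \<zero>\<^bsub>R\<^esub>}"

definition is_poly_coeffs :: "('a, 'm) ring_scheme \<Rightarrow> (nat \<Rightarrow> 'a) \<Rightarrow> bool" where
  "is_poly_coeffs R p \<longleftrightarrow> (\<forall>i. p i \<in> carrier R) \<and> (\<exists>n. \<forall>i>n. p i = \<zero>\<^bsub>R\<^esub>)"

definition prod_coeff :: "('a, 'm) ring_scheme \<Rightarrow> (nat \<Rightarrow> 'a) \<Rightarrow> (nat \<Rightarrow> 'a) \<Rightarrow> nat \<Rightarrow> 'a" where
  "prod_coeff R p q k = finsum R (\<lambda>i. p i \<otimes>\<^bsub>R\<^esub> q (k - i)) {..k}"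

definition nil_armendariz :: "('a, 'm) ring_scheme \<Rightarrow> bool" where
  "nil_armendariz R \<longleftrightarrow>
     (\<forall>p q. is_poly_coeffs R p \<longrightarrow> is_poly_coeffs R q \<longrightarrow>
        (\<forall>k. prod_coeff R p q k \<in> nil_elems R) \<longrightarrow>
        (\<forall>i j. p i \<otimes>\<^bsub>R\<^esub> q j \<in> nil_elems R))"

definition amalgamation ::
  "('a, 'm) ring_scheme \<Rightarrow> ('b, 'n) ring_scheme \<Rightarrow> ('a \<Rightarrow> 'b) \<Rightarrow> 'b set \<Rightarrow> ('a \<times> 'b) ring" where
  "amalgamation A B f J =
     (RDirProd A B) \<lparr> carrier := {(a, f a \<oplus>\<^bsub>B\<^esub> j) | a j. a \<in> carrier A \<and> j \<in> J} \<rparr>"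

definition image_plus_ideal ::
  "('a, 'm) ring_scheme \<Rightarrow> ('b, 'n) ring_scheme \<Rightarrow> ('a \<Rightarrow> 'b) \<Rightarrow> 'b set \<Rightarrow> ('b, 'n) ring_scheme" where
  "image_plus_ideal A B f J =
     B \<lparr> carrier := {f a \<oplus>\<^bsub>B\<^esub> j | a j. a \<in> carrier A \<and> j \<in> J} \<rparr>"

end

theory Submission
  imports Defs
begin

text \<open>The map \<open>a \<mapsto> (a, f a)\<close> embeds \<open>A\<close> into \<open>A \<bowtie>\<^sup>f J\<close>, and \<open>A \<bowtie>\<^sup>f J\<close> is a subring
  of \<open>A \<times> (f(A) + J)\<close>. So both parts follow from two closure properties of nil-Armendariz rings:
  they are closed under injective homomorphic preimages, because an injective homomorphism maps
  coefficients of products to coefficients of products and reflects nilpotency; and they are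
  closed under direct products, because \<open>nil(R \<times> S) = nil(R) \<times> nil(S)\<close>.\<close>

lemma (in ring) nat_pow_eq_zero_mono:
  assumes "x \<in> carrier R" and "x [^] (n::nat) = \<zero>" and "n \<le> m"
  shows "x [^] m = \<zero>"
proof -
  obtain d where "m = n + d"
    using assms(3) le_Suc_ex by blast
  then have "x [^] m = x [^] n \<otimes> x [^] d"
    using assms(1) by (simp add: nat_pow_mult)
  then show ?thesis
    using assms(1,2) by simp
qed

lemma (in ring_hom_ring) hom_nil_elems:
  "x \<in> nil_elems R \<Longrightarrow> h x \<in> nil_elems S"
proof -
  assume "x \<in> nil_elems R"
  then obtain n :: nat where "x \<in> carrier R" and "x [^] n = \<zero>"
    unfolding nil_elems_def by blast
  then have "h x [^]\<^bsub>S\<^esub> n = \<zero>\<^bsub>S\<^esub>"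
    by (simp flip: hom_nat_pow)
  with \<open>x \<in> carrier R\<close> show ?thesis
    unfolding nil_elems_def by auto
qed

lemma (in ring_hom_ring) nil_elems_of_inj:
  assumes "inj_on h (carrier R)" and "x \<in> carrier R" and "h x \<in> nil_elems S"
  shows "x \<in> nil_elems R"
proof -
  obtain n :: nat where "h (x [^] n) = h \<zero>"
    using assms(2,3) unfolding nil_elems_def by (auto simp: hom_nat_pow)
  then have "x [^] n = \<zero>"
    using assms(2) by (intro inj_onD[OF assms(1)]) auto
  then show ?thesis
    using assms(2) unfolding nil_elems_def by blast
qed

lemma (in ring_hom_ring) hom_is_poly_coeffs:
  "is_poly_coeffs R p \<Longrightarrow> is_poly_coeffs S (h \<circ> p)"
  unfolding is_poly_coeffs_def by (metis comp_apply hom_closed hom_zero)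

lemma (in ring_hom_ring) hom_prod_coeff:
  assumes "\<And>i. p i \<in> carrier R" and "\<And>i. q i \<in> carrier R"
  shows "h (prod_coeff R p q k) = prod_coeff S (h \<circ> p) (h \<circ> q) k"
  unfolding prod_coeff_def using assms by (simp add: Pi_def comp_def)

theorem (in ring_hom_ring) nil_armendariz_inj_preimage:
  assumes arm: "nil_armendariz S" and inj: "inj_on h (carrier R)"
  shows "nil_armendariz R"
  unfolding nil_armendariz_def
proof (intro allI impI)
  fix p q i j
  assume p: "is_poly_coeffs R p" and q: "is_poly_coeffs R q"
    and pq: "\<forall>k. prod_coeff R p q k \<in> nil_elems R"
  have pc: "\<And>i. p i \<in> carrier R" and qc: "\<And>i. q i \<in> carrier R"
    using p q unfolding is_poly_coeffs_def by auto
  have "\<forall>k. prod_coeff S (h \<circ> p) (h \<circ> q) k \<in> nil_elems S"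
    using pq pc qc by (simp flip: hom_prod_coeff add: hom_nil_elems)
  then have "h (p i) \<otimes>\<^bsub>S\<^esub> h (q j) \<in> nil_elems S"
    using arm hom_is_poly_coeffs[OF p] hom_is_poly_coeffs[OF q]
    unfolding nil_armendariz_def by fastforce
  then show "p i \<otimes> q j \<in> nil_elems R"
    using pc qc by (intro nil_elems_of_inj[OF inj]) auto
qed

lemma RDirProd_simps [simp]:
  "(a, b) \<otimes>\<^bsub>RDirProd R S\<^esub> (c, d) = (a \<otimes>\<^bsub>R\<^esub> c, b \<otimes>\<^bsub>S\<^esub> d)"
  "(a, b) \<oplus>\<^bsub>RDirProd R S\<^esub> (c, d) = (a \<oplus>\<^bsub>R\<^esub> c, b \<oplus>\<^bsub>S\<^esub> d)"
  "\<zero>\<^bsub>RDirProd R S\<^esub> = (\<zero>\<^bsub>R\<^esub>, \<zero>\<^bsub>S\<^esub>)"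
  "\<one>\<^bsub>RDirProd R S\<^esub> = (\<one>\<^bsub>R\<^esub>, \<one>\<^bsub>S\<^esub>)"
  by (simp_all add: RDirProd_def DirProd_def monoid.defs)

lemma RDirProd_nat_pow:
  "(a, b) [^]\<^bsub>RDirProd R S\<^esub> (n::nat) = (a [^]\<^bsub>R\<^esub> n, b [^]\<^bsub>S\<^esub> n)"
  by (induct n) simp_all

lemma RDirProd_a_inv:
  assumes "ring R" and "ring S" and "a \<in> carrier R" and "b \<in> carrier S"
  shows "\<ominus>\<^bsub>RDirProd R S\<^esub> (a, b) = (\<ominus>\<^bsub>R\<^esub> a, \<ominus>\<^bsub>S\<^esub> b)"
proof -
  interpret RS: ring "RDirProd R S" using RDirProd_ring[OF assms(1,2)] .
  show ?thesis
    using assms by (intro RS.minus_equality) (auto simp: RDirProd_carrier ring.ring_simprules)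
qed

lemma RDirProd_fst_hom: "fst \<in> ring_hom (RDirProd R S) R"
  and RDirProd_snd_hom: "snd \<in> ring_hom (RDirProd R S) S"
  by (auto simp: ring_hom_def RDirProd_def DirProd_def monoid.defs)

lemma nil_elems_RDirProd:
  assumes "ring R" and "ring S"
  shows "(x, y) \<in> nil_elems (RDirProd R S) \<longleftrightarrow> x \<in> nil_elems R \<and> y \<in> nil_elems S"
proof
  assume "(x, y) \<in> nil_elems (RDirProd R S)"
  then show "x \<in> nil_elems R \<and> y \<in> nil_elems S"
    unfolding nil_elems_def by (auto simp: RDirProd_carrier RDirProd_nat_pow)
next
  assume "x \<in> nil_elems R \<and> y \<in> nil_elems S"
  then obtain m n :: nat where x: "x \<in> carrier R" "x [^]\<^bsub>R\<^esub> m = \<zero>\<^bsub>R\<^esub>"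
    and y: "y \<in> carrier S" "y [^]\<^bsub>S\<^esub> n = \<zero>\<^bsub>S\<^esub>"
    unfolding nil_elems_def by blast
  have "x [^]\<^bsub>R\<^esub> (m + n) = \<zero>\<^bsub>R\<^esub>" and "y [^]\<^bsub>S\<^esub> (m + n) = \<zero>\<^bsub>S\<^esub>"
    using ring.nat_pow_eq_zero_mono[OF assms(1) x] ring.nat_pow_eq_zero_mono[OF assms(2) y] by auto
  with x(1) y(1) show "(x, y) \<in> nil_elems (RDirProd R S)"
    unfolding nil_elems_def by (auto simp: RDirProd_carrier RDirProd_nat_pow)
qed

theorem nil_armendariz_RDirProd:
  assumes R: "ring R" and S: "ring S"
    and arm_R: "nil_armendariz R" and arm_S: "nil_armendariz S"
  shows "nil_armendariz (RDirProd R S)"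
  unfolding nil_armendariz_def
proof (intro allI impI)
  fix p q i j
  assume p: "is_poly_coeffs (RDirProd R S) p" and q: "is_poly_coeffs (RDirProd R S) q"
    and pq: "\<forall>k. prod_coeff (RDirProd R S) p q k \<in> nil_elems (RDirProd R S)"
  interpret RS: ring "RDirProd R S"
    using RDirProd_ring[OF R S] .
  interpret fst: ring_hom_ring "RDirProd R S" R fst
    by (rule ring_hom_ringI2[OF RS.ring_axioms R RDirProd_fst_hom])
  interpret snd: ring_hom_ring "RDirProd R S" S snd
    by (rule ring_hom_ringI2[OF RS.ring_axioms S RDirProd_snd_hom])
  have pc: "\<And>i. p i \<in> carrier (RDirProd R S)" and qc: "\<And>i. q i \<in> carrier (RDirProd R S)"
    using p q unfolding is_poly_coeffs_def by auto
  have "fst (p i) \<otimes>\<^bsub>R\<^esub> fst (q j) \<in> nil_elems R"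
    using arm_R fst.hom_is_poly_coeffs[OF p] fst.hom_is_poly_coeffs[OF q] pq pc qc
    unfolding nil_armendariz_def by (fastforce simp flip: fst.hom_prod_coeff intro: fst.hom_nil_elems)
  moreover have "snd (p i) \<otimes>\<^bsub>S\<^esub> snd (q j) \<in> nil_elems S"
    using arm_S snd.hom_is_poly_coeffs[OF p] snd.hom_is_poly_coeffs[OF q] pq pc qc
    unfolding nil_armendariz_def by (fastforce simp flip: snd.hom_prod_coeff intro: snd.hom_nil_elems)
  ultimately show "p i \<otimes>\<^bsub>RDirProd R S\<^esub> q j \<in> nil_elems (RDirProd R S)"
    using nil_elems_RDirProd[OF R S] by (metis RDirProd_simps(1) prod.collapse)
qed

lemma amalgamation_carrier:
  "carrier (amalgamation A B f J) = {(a, f a \<oplus>\<^bsub>B\<^esub> j) | a j. a \<in> carrier A \<and> j \<in> J}"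
  by (simp add: amalgamation_def)

lemma subring_amalgamation:
  assumes A: "ring A" and B: "ring B" and f: "f \<in> ring_hom A B" and J: "ideal J B"
  shows "subring (carrier (amalgamation A B f J)) (RDirProd A B)"
proof -
  interpret AB: ring "RDirProd A B" using RDirProd_ring[OF A B] .
  interpret A: ring A by (rule A)
  interpret B: ring B by (rule B)
  interpret f: ring_hom_ring A B f by (rule ring_hom_ringI2[OF A B f])
  interpret J: ideal J B by (rule J)
  have JB: "\<And>j. j \<in> J \<Longrightarrow> j \<in> carrier B" using J.a_subset by auto
  show ?thesis
    unfolding amalgamation_carrier
  proof (rule AB.subringI)
    show "{(a, f a \<oplus>\<^bsub>B\<^esub> j) | a j. a \<in> carrier A \<and> j \<in> J} \<subseteq> carrier (RDirProd A B)"
      using JB by (auto simp: RDirProd_carrier)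
    show "\<one>\<^bsub>RDirProd A B\<^esub> \<in> {(a, f a \<oplus>\<^bsub>B\<^esub> j) | a j. a \<in> carrier A \<and> j \<in> J}"
      by (auto intro!: exI[of _ "\<one>\<^bsub>A\<^esub>"] exI[of _ "\<zero>\<^bsub>B\<^esub>"] J.zero_closed)
  next
    fix x assume "x \<in> {(a, f a \<oplus>\<^bsub>B\<^esub> j) | a j. a \<in> carrier A \<and> j \<in> J}"
    then obtain a j where x: "x = (a, f a \<oplus>\<^bsub>B\<^esub> j)" "a \<in> carrier A" "j \<in> J" by auto
    have "\<ominus>\<^bsub>RDirProd A B\<^esub> x = (\<ominus>\<^bsub>A\<^esub> a, f (\<ominus>\<^bsub>A\<^esub> a) \<oplus>\<^bsub>B\<^esub> \<ominus>\<^bsub>B\<^esub> j)"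
      using x JB[OF x(3)] by (simp add: RDirProd_a_inv[OF A B] B.minus_add f.hom_a_inv)
    then show "\<ominus>\<^bsub>RDirProd A B\<^esub> x \<in> {(a, f a \<oplus>\<^bsub>B\<^esub> j) | a j. a \<in> carrier A \<and> j \<in> J}"
      using x by (auto intro: J.a_inv_closed)
  next
    fix x y
    assume "x \<in> {(a, f a \<oplus>\<^bsub>B\<^esub> j) | a j. a \<in> carrier A \<and> j \<in> J}"
      and "y \<in> {(a, f a \<oplus>\<^bsub>B\<^esub> j) | a j. a \<in> carrier A \<and> j \<in> J}"
    then obtain a j c k where x: "x = (a, f a \<oplus>\<^bsub>B\<^esub> j)" "a \<in> carrier A" "j \<in> J"
      and y: "y = (c, f c \<oplus>\<^bsub>B\<^esub> k)" "c \<in> carrier A" "k \<in> J" by auto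
    have jk: "j \<in> carrier B" "k \<in> carrier B" using JB x y by auto
    have fac: "f a \<in> carrier B" "f c \<in> carrier B" using x y by auto
    have "x \<otimes>\<^bsub>RDirProd A B\<^esub> y = (a \<otimes>\<^bsub>A\<^esub> c, f (a \<otimes>\<^bsub>A\<^esub> c) \<oplus>\<^bsub>B\<^esub>
        ((f a \<otimes>\<^bsub>B\<^esub> k \<oplus>\<^bsub>B\<^esub> j \<otimes>\<^bsub>B\<^esub> f c) \<oplus>\<^bsub>B\<^esub> j \<otimes>\<^bsub>B\<^esub> k))"
      using x y jk fac by (simp add: B.l_distr B.r_distr B.a_ac)
    moreover have "(f a \<otimes>\<^bsub>B\<^esub> k \<oplus>\<^bsub>B\<^esub> j \<otimes>\<^bsub>B\<^esub> f c) \<oplus>\<^bsub>B\<^esub> j \<otimes>\<^bsub>B\<^esub> k \<in> J"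
      using x y jk fac by (intro J.a_closed J.I_l_closed J.I_r_closed) auto
    ultimately show "x \<otimes>\<^bsub>RDirProd A B\<^esub> y \<in> {(a, f a \<oplus>\<^bsub>B\<^esub> j) | a j. a \<in> carrier A \<and> j \<in> J}"
      using x y by auto
    have "x \<oplus>\<^bsub>RDirProd A B\<^esub> y = (a \<oplus>\<^bsub>A\<^esub> c, f (a \<oplus>\<^bsub>A\<^esub> c) \<oplus>\<^bsub>B\<^esub> (j \<oplus>\<^bsub>B\<^esub> k))"
      using x y jk fac by (simp add: B.a_ac)
    then show "x \<oplus>\<^bsub>RDirProd A B\<^esub> y \<in> {(a, f a \<oplus>\<^bsub>B\<^esub> j) | a j. a \<in> carrier A \<and> j \<in> J}"
      using x y by (auto intro: J.a_closed)
  qed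
qed

lemma ring_amalgamation:
  assumes "ring A" and "ring B" and "f \<in> ring_hom A B" and "ideal J B"
  shows "ring (amalgamation A B f J)"
  using ring.subring_is_ring[OF RDirProd_ring subring_amalgamation] assms
  by (simp add: amalgamation_def)

lemma image_plus_ideal_eq_snd_image:
  "image_plus_ideal A B f J = B\<lparr>carrier := snd ` carrier (amalgamation A B f J)\<rparr>"
proof -
  have "{f a \<oplus>\<^bsub>B\<^esub> j | a j. a \<in> carrier A \<and> j \<in> J}
      = snd ` {(a, f a \<oplus>\<^bsub>B\<^esub> j) | a j. a \<in> carrier A \<and> j \<in> J}"
    by force
  then show ?thesis
    by (simp add: image_plus_ideal_def amalgamation_carrier)
qed

lemma ring_image_plus_ideal:
  assumes A: "ring A" and B: "ring B" and "f \<in> ring_hom A B" and "ideal J B"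
  shows "ring (image_plus_ideal A B f J)"
proof -
  interpret snd: ring_hom_ring "RDirProd A B" B snd
    by (rule ring_hom_ringI2[OF RDirProd_ring[OF A B] B RDirProd_snd_hom])
  show ?thesis
    unfolding image_plus_ideal_eq_snd_image
    using snd.img_is_subring[OF subring_amalgamation[OF assms]] by (rule ring.subring_is_ring[OF B])
qed

lemma amalgamation_diagonal_hom:
  assumes "ring B" and f: "f \<in> ring_hom A B" and "ideal J B"
  shows "(\<lambda>a. (a, f a)) \<in> ring_hom A (amalgamation A B f J)"
proof -
  interpret B: ring B by fact
  interpret J: ideal J B by fact
  have "(a, f a) \<in> carrier (amalgamation A B f J)" if "a \<in> carrier A" for a
    using ring_hom_closed[OF f that] that
    by (force simp: amalgamation_carrier intro: exI[of _ "\<zero>\<^bsub>B\<^esub>"])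
  then show ?thesis
    using f by (auto simp: ring_hom_def amalgamation_def)
qed

lemma amalgamation_incl_hom:
  "id \<in> ring_hom (amalgamation A B f J) (RDirProd A (image_plus_ideal A B f J))"
  by (auto simp: ring_hom_def amalgamation_def image_plus_ideal_def RDirProd_def DirProd_def
      monoid.defs) blast

theorem theorem3p1:
  fixes A :: "('a, 'm) ring_scheme" and B :: "('b, 'n) ring_scheme"
    and f :: "'a \<Rightarrow> 'b" and J :: "'b set"
  assumes "ring A" and "ring B" and "f \<in> ring_hom A B"
    and "ideal J B" and "J \<noteq> carrier B"
  shows "(nil_armendariz (amalgamation A B f J) \<longrightarrow> nil_armendariz A)
       \<and> (nil_armendariz A \<and> nil_armendariz (image_plus_ideal A B f J)
            \<longrightarrow> nil_armendariz (amalgamation A B f J))"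
proof (intro conjI impI)
  have amal: "ring (amalgamation A B f J)"
    using ring_amalgamation[OF assms(1-4)] .
  show "nil_armendariz A" if "nil_armendariz (amalgamation A B f J)"
  proof (rule ring_hom_ring.nil_armendariz_inj_preimage)
    show "ring_hom_ring A (amalgamation A B f J) (\<lambda>a. (a, f a))"
      using amalgamation_diagonal_hom[OF assms(2-4)] by (rule ring_hom_ringI2[OF assms(1) amal])
  qed (use that in \<open>auto intro: inj_onI\<close>)
  show "nil_armendariz (amalgamation A B f J)"
    if "nil_armendariz A \<and> nil_armendariz (image_plus_ideal A B f J)"
  proof (rule ring_hom_ring.nil_armendariz_inj_preimage)
    have C: "ring (image_plus_ideal A B f J)"
      using ring_image_plus_ideal[OF assms(1-4)] .
    show "ring_hom_ring (amalgamation A B f J) (RDirProd A (image_plus_ideal A B f J)) id"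
      using amalgamation_incl_hom by (rule ring_hom_ringI2[OF amal RDirProd_ring[OF assms(1) C]])
    show "nil_armendariz (RDirProd A (image_plus_ideal A B f J))"
      using that by (intro nil_armendariz_RDirProd[OF assms(1) C]) auto
  qed simp
qed

end
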